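(* In the non-stationary non-deterministic bandit described in the context, satisfying the stated assumption with constants $\theta>1$, $\xi>1$, $1/2\le\eta<1$, where $\xi$ is large enough that $\alpha>2$ satisfies $\xi\eta(1-\eta)\le\alpha<\xi(1-\eta)$, run the UCB algorithm of the context and let $\bar\rho_n=\frac1n\sum_{i=1}^KT_i(n)\hat\rho_{i,T_i(n)}$. Then 1. $|\mu^*-\mathbb{E}[\bar\rho_n]|\le O\big(\exp(2\beta R)n^{\frac{\alpha}{\xi(1-\eta)}-1}\big)$, in particular $\lim_{n\to\infty}\mathbb{E}[\bar\rho_n]=\mu^*$; 2. there exist constants $\theta'>1$, $\xi'>1$, $1/2\le\eta'<1$ such that for any $z\ge1$ and $n\in\mathbb{N}$, $$\mathbb{P}[n\bar\rho_n-n\mu^*\ge n^{\eta'}z]\le\frac{\theta'}{z^{\xi'}},\qquad \mathbb{P}[n\bar\rho_n-n\mu^*\le -n^{\eta'}z]\le\frac{\theta'}{z^{\xi'}},$$ where $\eta'=\frac{\alpha}{\xi(1-\eta)}$, $\xi'=\alpha-1$, and $\theta'$ depends on $R,K,\Delta_{\min},\beta,\theta^L,\xi,\alpha,\eta$.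
   Context: Non-deterministic bandit with $K$ arms and finite state set $\mathcal{S}$, $\beta>0$, $\gamma\in(0,1]$. Selecting arm $i$ yields a deterministic cost $c_i\in[-R_c,R_c]$ and a next state $s'$ drawn independently each time from a distribution $P^i$ on $\mathcal{S}$; for each $i,s'$ there is a sequence of (possibly non-stationary) random costs $(x^{s'}_{i,t})_{t\ge1}$ in $[-R_x,R_x]$, the $t$-th cost obtained after state $s'$ follows arm $i$. $R=R_c+R_x$; $\mathrm{ERM}_b(Z)=\frac1b\ln\mathbb{E}[e^{bZ}]$. Let $\hat\rho^{s'}_{i,n}=\frac1{\beta\gamma}\ln(\frac1n\sum_{t=1}^n e^{\beta\gamma x^{s'}_{i,t}})$, $\mu^{s'}_{i,n}=\mathbb{E}[\hat\rho^{s'}_{i,n}]$. Assumption: $\lim_n\mu^{s'}_{i,n}=\mu^{s'}_i$ exists and $\mathbb{P}[n\hat\rho^{s'}_{i,n}-n\mu^{s'}_i\ge n^\eta z]\le\theta/z^\xi$, $\mathbb{P}[n\hat\rho^{s'}_{i,n}-n\mu^{s'}_i\le -n^\eta z]\le\theta/z^\xi$ for all $i,s'$, $z\ge1$, $n\in\mathbb{N}$. With $T^{s'}_i(n)$ the number of times $s'$ was sampled in the first $n$ selections of arm $i$, $\hat\rho_{i,n}=\frac1\beta\ln\big(\frac1n\sum_{s'}\sum_{t=1}^{T^{s'}_i(n)}\exp(\beta(c_i+\gamma x^{s'}_{i,t}))\big)$, and $\mu_i=\frac1\beta\ln\mathbb{E}_{s'\sim P^i}[\exp(\beta(c_i+\gamma\mu^{s'}_i))]$.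 Let $\theta^L>1$ be a constant such that $\mathbb{P}[n\hat\rho_{i,n}-n\mu_i\ge n^\eta z]\le\theta^L/z^\xi$ and $\mathbb{P}[n\hat\rho_{i,n}-n\mu_i\le -n^\eta z]\le\theta^L/z^\xi$ for all $i$, $z\ge1$, $n$ (such a constant, depending on $\xi,\theta,R,\beta,|\mathcal{S}|$, exists). There is a unique arm $i^*$ attaining $\mu^*=\min_i\mu_i$; $\Delta_i=\mu_i-\mu^*$, $\Delta_{\min}=\min_{i\ne i^*}\Delta_i$. Algorithm (with $\alpha>0$): select each arm once, then at timestep $t$ select $a_t=\arg\min_i\{\hat\rho_{i,T_i(t-1)}-b_{t,T_i(t-1)}\}$ with $b_{t,s}=(\theta^L)^{1/\xi}t^{\alpha/\xi}/s^{1-\eta}$, where $T_i(n)$ is the number of selections of arm $i$ during timesteps $1,\dots,n$. *)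

theory Defs
  imports "HOL-Probability.Probability"
begin

text \<open>Arms are indexed by 0..<K, states by natural numbers in a finite set S.
  nx i k w : the next state drawn at the k-th selection (k >= 1) of arm i.
  x i s t w : the t-th cost (t >= 1) obtained after state s followed arm i.\<close>

definition rho_s :: "real \<Rightarrow> real \<Rightarrow> (nat \<Rightarrow> nat \<Rightarrow> nat \<Rightarrow> 'w \<Rightarrow> real)
    \<Rightarrow> nat \<Rightarrow> nat \<Rightarrow> nat \<Rightarrow> 'w \<Rightarrow> real" where
  "rho_s \<beta> \<gamma> x i s n w =
     ln ((\<Sum>t=1..n. exp (\<beta> * \<gamma> * x i s t w)) / real n) / (\<beta> * \<gamma>)"

definition Tst :: "(nat \<Rightarrow> nat \<Rightarrow> 'w \<Rightarrow> nat) \<Rightarrow> nat \<Rightarrow> nat \<Rightarrow> nat \<Rightarrow> 'w \<Rightarrow> nat" where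
  "Tst nx i s n w = card {k \<in> {1..n}. nx i k w = s}"

definition rho_arm :: "real \<Rightarrow> real \<Rightarrow> nat set \<Rightarrow> (nat \<Rightarrow> real)
    \<Rightarrow> (nat \<Rightarrow> nat \<Rightarrow> nat \<Rightarrow> 'w \<Rightarrow> real) \<Rightarrow> (nat \<Rightarrow> nat \<Rightarrow> 'w \<Rightarrow> nat)
    \<Rightarrow> nat \<Rightarrow> nat \<Rightarrow> 'w \<Rightarrow> real" where
  "rho_arm \<beta> \<gamma> S c x nx i n w =
     ln ((\<Sum>s\<in>S. \<Sum>t=1..Tst nx i s n w. exp (\<beta> * (c i + \<gamma> * x i s t w))) / real n) / \<beta>"

definition mu_arm :: "real \<Rightarrow> real \<Rightarrow> (nat \<Rightarrow> real) \<Rightarrow> (nat \<Rightarrow> nat pmf)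
    \<Rightarrow> (nat \<Rightarrow> nat \<Rightarrow> real) \<Rightarrow> nat \<Rightarrow> real" where
  "mu_arm \<beta> \<gamma> c P mu_s i =
     ln (measure_pmf.expectation (P i) (\<lambda>s. exp (\<beta> * (c i + \<gamma> * mu_s i s)))) / \<beta>"

definition Tarm :: "(nat \<Rightarrow> 'w \<Rightarrow> nat) \<Rightarrow> nat \<Rightarrow> nat \<Rightarrow> 'w \<Rightarrow> nat" where
  "Tarm a i n w = card {t \<in> {1..n}. a t w = i}"

definition bonus :: "real \<Rightarrow> real \<Rightarrow> real \<Rightarrow> real \<Rightarrow> nat \<Rightarrow> nat \<Rightarrow> real" where
  "bonus \<theta>L \<xi> \<alpha> \<eta> t s = \<theta>L powr (1/\<xi>) * real t powr (\<alpha>/\<xi>) / real s powr (1 - \<eta>)"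

definition ucb_index where
  "ucb_index \<beta> \<gamma> S c x nx \<theta>L \<xi> \<alpha> \<eta> a i t w =
     rho_arm \<beta> \<gamma> S c x nx i (Tarm a i (t - 1) w) w - bonus \<theta>L \<xi> \<alpha> \<eta> t (Tarm a i (t - 1) w)"

definition rho_bar where
  "rho_bar K \<beta> \<gamma> S c x nx a n w =
     (\<Sum>i<K. real (Tarm a i n w) * rho_arm \<beta> \<gamma> S c x nx i (Tarm a i n w) w) / real n"

definition nd_bandit ::
  "'w measure \<Rightarrow> nat \<Rightarrow> nat set \<Rightarrow> real \<Rightarrow> real \<Rightarrow> real \<Rightarrow> real \<Rightarrow> real \<Rightarrow> real \<Rightarrow> real
   \<Rightarrow> (nat \<Rightarrow> real) \<Rightarrow> (nat \<Rightarrow> nat pmf) \<Rightarrow> (nat \<Rightarrow> nat \<Rightarrow> nat \<Rightarrow> 'w \<Rightarrow> real)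
   \<Rightarrow> (nat \<Rightarrow> nat \<Rightarrow> real) \<Rightarrow> (nat \<Rightarrow> nat \<Rightarrow> 'w \<Rightarrow> nat) \<Rightarrow> bool" where
  "nd_bandit M K S Rc Rx \<beta> \<gamma> \<theta> \<xi> \<eta> c P x mu_s nx \<longleftrightarrow>
     prob_space M \<and> finite S \<and> S \<noteq> {} \<and> \<beta> > 0 \<and> 0 < \<gamma> \<and> \<gamma> \<le> 1 \<and>
     (\<forall>i<K. \<bar>c i\<bar> \<le> Rc) \<and>
     (\<forall>i<K. set_pmf (P i) \<subseteq> S) \<and>
     (\<forall>i<K. \<forall>k\<ge>1. nx i k \<in> measurable M (count_space UNIV) \<and>
         distr M (count_space UNIV) (nx i k) = measure_pmf (P i)) \<and>
     prob_space.indep_vars M (\<lambda>_. count_space UNIV) (\<lambda>(i, k). nx i k) ({..<K} \<times> {1..}) \<and>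
     (\<forall>i<K. \<forall>s\<in>S. \<forall>t\<ge>1. x i s t \<in> borel_measurable M \<and> (\<forall>w\<in>space M. \<bar>x i s t w\<bar> \<le> Rx)) \<and>
     (\<forall>i<K. \<forall>s\<in>S. (\<lambda>n. integral\<^sup>L M (rho_s \<beta> \<gamma> x i s n)) \<longlonglongrightarrow> mu_s i s) \<and>
     (\<forall>i<K. \<forall>s\<in>S. \<forall>z::real. \<forall>n::nat. z \<ge> 1 \<longrightarrow> n \<ge> 1 \<longrightarrow>
        measure M {w \<in> space M. real n * rho_s \<beta> \<gamma> x i s n w - real n * mu_s i s \<ge> real n powr \<eta> * z}
          \<le> \<theta> / z powr \<xi> \<and>
        measure M {w \<in> space M. real n * rho_s \<beta> \<gamma> x i s n w - real n * mu_s i s \<le> - (real n powr \<eta> * z)}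
          \<le> \<theta> / z powr \<xi>)"

text \<open>The UCB algorithm (arbitrary measurable tie-breaking in the argmin).\<close>
definition ucb_policy where
  "ucb_policy M K \<beta> \<gamma> S c x nx \<theta>L \<xi> \<alpha> \<eta> a \<longleftrightarrow>
     (\<forall>t. a t \<in> measurable M (count_space UNIV)) \<and>
     (\<forall>t\<in>{1..K}. \<forall>w\<in>space M. a t w = t - 1) \<and>
     (\<forall>t>K. \<forall>w\<in>space M. a t w < K \<and>
        (\<forall>j<K. ucb_index \<beta> \<gamma> S c x nx \<theta>L \<xi> \<alpha> \<eta> a (a t w) t w
               \<le> ucb_index \<beta> \<gamma> S c x nx \<theta>L \<xi> \<alpha> \<eta> a j t w))"

end

theory Submission
  imports Defs
begin

(* On the almost sure event that every sampled state lies in S, all estimates are bounded by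
   R = Rc + Rx, and one more sample of an arm changes n rho_{i,n} by at most a constant. Hence
   n rho_bar_n - n mu* differs from the optimal arm's n rho_{i*,n} - n mu* by at most a constant
   times the number of suboptimal pulls. The UCB rule pulls a suboptimal arm more than
   A n^eta' + v times only if at some sample count s <= n the optimal arm was overestimated, or
   that arm underestimated, by s^eta theta_L^(1/xi) max(v,s)^(alpha/xi); by the concentration of
   the arms and a union bound over s this has probability O(v^(1 - alpha)). Choosing v
   proportional to z gives the tail bounds with exponent alpha - 1, and summing them over dyadic
   levels bounds E|n rho_bar_n - n mu*| by O(n^eta'), which is the bias estimate. *)

section \<open>Elementary estimates\<close>

lemma abs_ln_div_le:
  fixes Q m r :: real
  assumes "0 < m" and "m * exp (- r) \<le> Q" and "Q \<le> m * exp r"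
  shows "\<bar>ln (Q / m)\<bar> \<le> r"
proof -
  have lo: "exp (- r) \<le> Q / m" and hi: "Q / m \<le> exp r"
    using assms by (simp_all add: field_simps)
  have pos: "0 < Q / m"
    using lo exp_gt_zero[of "- r"] by linarith
  have "- r \<le> ln (Q / m)"
    using lo pos by (simp add: ln_ge_iff)
  moreover have "ln (Q / m) \<le> r"
    using ln_mono[OF hi pos] by simp
  ultimately show ?thesis
    by (simp add: abs_le_iff)
qed

lemma exp_bounds_of_abs_le:
  fixes b u r :: real
  assumes "b > 0" and "\<bar>u\<bar> \<le> r"
  shows "exp (- (b * r)) \<le> exp (b * u)" and "exp (b * u) \<le> exp (b * r)"
  using assms mult_left_mono[of u r b] mult_left_mono[of "- r" u b] by (auto simp: abs_le_iff)

lemma abs_ln_mean_exp_le: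
  fixes b r :: real and y :: "nat \<Rightarrow> real"
  assumes "b > 0" and "n \<ge> 1" and "\<And>t. t \<in> {1..n} \<Longrightarrow> \<bar>y t\<bar> \<le> r"
  shows "\<bar>ln ((\<Sum>t=1..n. exp (b * y t)) / real n) / b\<bar> \<le> r"
proof -
  have "exp (- (b * r)) \<le> exp (b * y t) \<and> exp (b * y t) \<le> exp (b * r)" if "t \<in> {1..n}" for t
    using exp_bounds_of_abs_le[OF assms(1) assms(3)[OF that]] by simp
  then have "real n * exp (- (b * r)) \<le> (\<Sum>t=1..n. exp (b * y t))"
    and "(\<Sum>t=1..n. exp (b * y t)) \<le> real n * exp (b * r)"
    using sum_bounded_below[of "{1..n}" "exp (- (b * r))"] sum_bounded_above[of "{1..n}" _ "exp (b * r)"]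
    by auto
  then have "\<bar>ln ((\<Sum>t=1..n. exp (b * y t)) / real n)\<bar> \<le> b * r"
    using assms(2) by (intro abs_ln_div_le) auto
  then show ?thesis
    using assms(1) by (simp add: abs_divide pos_divide_le_eq mult.commute)
qed

lemma abs_cost_le:
  fixes c y \<gamma> Rc Rx :: real
  assumes "0 < \<gamma>" and "\<gamma> \<le> 1" and "\<bar>c\<bar> \<le> Rc" and "\<bar>y\<bar> \<le> Rx"
  shows "\<bar>c + \<gamma> * y\<bar> \<le> Rc + Rx"
proof -
  have "\<bar>\<gamma> * y\<bar> \<le> \<bar>y\<bar>"
    using assms(1,2) mult_right_mono[of \<gamma> 1 "\<bar>y\<bar>"] by (simp add: abs_mult)
  then show ?thesis
    using assms(3,4) by linarith
qed

lemma abs_ln_mean_increment_le: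
  fixes m Q e r :: real
  assumes m: "m \<ge> 1" and Q: "m * exp (- r) \<le> Q" "Q \<le> m * exp r"
    and e: "exp (- r) \<le> e" "e \<le> exp r"
  shows "\<bar>(m + 1) * ln ((Q + e) / (m + 1)) - m * ln (Q / m)\<bar> \<le> r + exp (2 * r) + 1"
proof -
  have Qpos: "Q > 0" and epos: "e > 0"
    using m Q(1) e(1) exp_gt_zero[of "- r"] by (smt (verit) mult_pos_pos)+
  have split: "(m + 1) * ln ((Q + e) / (m + 1)) - m * ln (Q / m)
      = ln ((Q + e) / (m + 1)) + m * ln (1 + e / Q) - m * ln (1 + 1 / m)"
  proof -
    have "1 + e / Q = (Q + e) / Q" and "1 + 1 / m = (m + 1) / m"
      using Qpos m by (simp_all add: field_simps)
    then show ?thesis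
      using Qpos epos m by (simp add: ln_div algebra_simps)
  qed
  have "\<bar>ln ((Q + e) / (m + 1))\<bar> \<le> r"
    using m Q e by (intro abs_ln_div_le) (auto simp: algebra_simps)
  moreover have "0 \<le> m * ln (1 + e / Q)" and "m * ln (1 + e / Q) \<le> exp (2 * r)"
  proof -
    show "0 \<le> m * ln (1 + e / Q)"
      using m Qpos epos by simp
    have "m * ln (1 + e / Q) \<le> m * e / Q"
      using m Qpos epos mult_left_mono[OF ln_add_one_self_le_self[of "e / Q"], of m] by simp
    also have "\<dots> \<le> (m * exp r) / (m * exp (- r))"
      using m Q e Qpos by (intro frac_le) (auto intro: mult_left_mono)
    also have "\<dots> = exp (2 * r)"
      using m by (simp add: exp_minus field_simps flip: exp_add)
    finally show "m * ln (1 + e / Q) \<le> exp (2 * r)" .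
  qed
  moreover have "0 \<le> m * ln (1 + 1 / m)" and "m * ln (1 + 1 / m) \<le> 1"
    using m mult_left_mono[OF ln_add_one_self_le_self[of "1 / m"], of m] by auto
  ultimately show ?thesis
    unfolding split by (simp add: abs_le_iff)
qed

lemma powr_neg_le_telescoping:
  fixes v k :: nat and \<alpha> :: real
  assumes "1 \<le> v" and "v \<le> k" and "\<alpha> \<ge> 2"
  shows "real (k + 1) powr (- \<alpha>) \<le> real v powr (2 - \<alpha>) * (1 / real k - 1 / real (k + 1))"
proof -
  have k: "real k \<ge> 1"
    using assms by simp
  have "real (k + 1) powr (- \<alpha>) = real (k + 1) powr (2 - \<alpha>) / (real (k + 1))\<^sup>2"
    using powr_diff[of "real (k + 1)" "2 - \<alpha>" 2] by (simp add: powr_numeral)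
  also have "\<dots> \<le> real v powr (2 - \<alpha>) / (real k * real (k + 1))"
    using assms k by (intro frac_le powr_mono2') (auto simp: power2_eq_square)
  also have "\<dots> = real v powr (2 - \<alpha>) * (1 / real k - 1 / real (k + 1))"
    using k by (simp add: field_simps)
  finally show ?thesis .
qed

lemma sum_powr_max_le:
  fixes v n :: nat and \<alpha> :: real
  assumes v: "v \<ge> 1" and \<alpha>: "\<alpha> \<ge> 2"
  shows "(\<Sum>s=1..n. real (max v s) powr (- \<alpha>)) \<le> 2 * real v powr (1 - \<alpha>)"
proof -
  have head: "(\<Sum>s=1..k. real (max v s) powr (- \<alpha>)) \<le> real v powr (1 - \<alpha>)" if "k \<le> v" for k
  proof -
    have "(\<Sum>s=1..k. real (max v s) powr (- \<alpha>)) = (\<Sum>s=1..k. real v powr (- \<alpha>))"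
      using that by (intro sum.cong) auto
    also have "\<dots> = real k * real v powr (- \<alpha>)"
      by simp
    also have "\<dots> \<le> real v * real v powr (- \<alpha>)"
      using that by (intro mult_right_mono) auto
    also have "\<dots> = real v powr (1 - \<alpha>)"
      using v by (simp add: powr_diff powr_minus_divide)
    finally show ?thesis .
  qed
  have tail: "(\<Sum>s=1..k. real (max v s) powr (- \<alpha>))
      \<le> real v powr (1 - \<alpha>) + real v powr (2 - \<alpha>) * (1 / real v - 1 / real k)" if "v \<le> k" for k
    using that
  proof (induction k rule: dec_induct)
    case base
    then show ?case
      using head[of v] by simp
  next
    case (step k)
    then have "(\<Sum>s=1..Suc k. real (max v s) powr (- \<alpha>))
        \<le> real v powr (1 - \<alpha>) + real v powr (2 - \<alpha>) * (1 / real v - 1 / real k)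
          + real v powr (2 - \<alpha>) * (1 / real k - 1 / real (k + 1))"
      using powr_neg_le_telescoping[OF v step.hyps(1) \<alpha>] by (simp add: max_def)
    then show ?case
      by (simp add: algebra_simps)
  qed
  show ?thesis
  proof (cases "n \<le> v")
    case True
    then show ?thesis
      using head[of n] by (smt (verit) powr_ge_zero)
  next
    case False
    have "real v powr (2 - \<alpha>) * (1 / real v - 1 / real n) \<le> real v powr (2 - \<alpha>) / real v"
      using False v by (simp add: right_diff_distrib)
    also have "\<dots> = real v powr (1 - \<alpha>)"
      using powr_diff[of "real v" "2 - \<alpha>" 1] v by simp
    finally show ?thesis
      using tail[of n] False by linarith
  qed
qed

lemma abs_le_dyadic_sum:
  fixes y p :: real and N :: nat
  assumes "p > 0" and "\<bar>y\<bar> < 2 ^ N * p"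
  shows "\<bar>y\<bar> \<le> p + (\<Sum>k<N. 2 ^ (k + 1) * p * (if 2 ^ k * p \<le> \<bar>y\<bar> then 1 else 0))"
  using assms(2)
proof (induction N)
  case 0
  then show ?case by simp
next
  case (Suc N)
  have "0 \<le> (\<Sum>k<N. 2 ^ (k + 1) * p * (if 2 ^ k * p \<le> \<bar>y\<bar> then 1 else 0))"
    using assms(1) by (intro sum_nonneg) auto
  then show ?case
    using Suc assms(1) by (cases "\<bar>y\<bar> < 2 ^ N * p") auto
qed

section \<open>Tail bounds and expectations\<close>

lemma (in prob_space) prob_abs_ge_le:
  fixes f :: "'a \<Rightarrow> real"
  assumes [measurable]: "f \<in> borel_measurable M"
  shows "prob {w \<in> space M. c \<le> \<bar>f w\<bar>}
    \<le> prob {w \<in> space M. c \<le> f w} + prob {w \<in> space M. c \<le> - f w}"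
proof -
  have "prob {w \<in> space M. c \<le> \<bar>f w\<bar>}
      \<le> prob ({w \<in> space M. c \<le> f w} \<union> {w \<in> space M. c \<le> - f w})"
    by (intro finite_measure_mono) (auto simp: abs_if)
  also have "\<dots> \<le> prob {w \<in> space M. c \<le> f w} + prob {w \<in> space M. c \<le> - f w}"
    by (intro measure_Un_le) measurable
  finally show ?thesis .
qed

lemma (in prob_space) prob_le_powr_from_large:
  fixes z z0 a c :: real
  assumes "1 \<le> z0" and "0 \<le> a" and "0 \<le> c" and "1 \<le> z"
    and large: "z0 \<le> z \<Longrightarrow> prob A \<le> c / z powr a"
  shows "prob A \<le> (z0 powr a + c) / z powr a"
proof (cases "z0 \<le> z")
  case True
  then show ?thesis
    using large assms(4) by (smt (verit) divide_right_mono powr_ge_zero)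
next
  case False
  have "prob A \<le> 1"
    by simp
  also have "\<dots> \<le> (z0 / z) powr a"
    using False assms by (intro ge_one_powr_ge_zero) auto
  also have "\<dots> \<le> (z0 powr a + c) / z powr a"
    using assms by (simp add: powr_divide divide_right_mono)
  finally show ?thesis .
qed

text \<open>Layer-cake estimate over the dyadic levels \<open>2 ^ k * p\<close>; the almost-everywhere bound
  only serves to make the sum finite.\<close>
lemma (in prob_space) integral_abs_le_of_tail:
  fixes f :: "'a \<Rightarrow> real" and B p a \<theta> :: real
  assumes [measurable]: "f \<in> borel_measurable M" and bounded: "AE w in M. \<bar>f w\<bar> \<le> B"
    and p: "p > 0" and a: "a > 1"
    and tail: "\<And>z. z \<ge> 1 \<Longrightarrow> prob {w \<in> space M. p * z \<le> \<bar>f w\<bar>} \<le> \<theta> / z powr a"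
  shows "(\<integral>w. \<bar>f w\<bar> \<partial>M) \<le> p * (1 + 2 * \<theta> / (1 - 2 powr (1 - a)))"
proof -
  define q :: real where "q = 2 powr (1 - a)"
  define E where "E k = {w \<in> space M. 2 ^ k * p \<le> \<bar>f w\<bar>}" for k :: nat
  have E [measurable]: "E k \<in> sets M" for k
    unfolding E_def by measurable
  have q: "0 \<le> q" "q < 1"
    using powr_less_mono[of "1 - a" 0 2] a by (auto simp: q_def)
  have \<theta>: "0 \<le> \<theta>"
    using tail[of 1] measure_nonneg[of M "{w \<in> space M. p \<le> \<bar>f w\<bar>}"] by (simp del: measure_nonneg)
  have prob_E: "prob (E k) \<le> \<theta> * (q ^ k / 2 ^ k)" for k
  proof -
    have "prob (E k) \<le> \<theta> / (2 ^ k) powr a"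
      using tail[of "2 ^ k"] by (simp add: E_def mult.commute)
    also have "(2 ^ k) powr a = (2 ^ k / q ^ k :: real)"
      by (simp add: q_def powr_realpow[symmetric] powr_powr powr_diff[symmetric]
          flip: powr_power) (simp add: algebra_simps)
    finally show ?thesis
      by simp
  qed
  obtain N where N: "B / p < 2 ^ N"
    using real_arch_pow[of 2 "B / p"] by auto
  have pointwise: "AE w in M. \<bar>f w\<bar> \<le> p + (\<Sum>k<N. 2 ^ (k + 1) * p * indicator (E k) w)"
    using bounded AE_space
  proof eventually_elim
    case (elim w)
    then have "\<bar>f w\<bar> < 2 ^ N * p"
      using N p by (simp add: divide_less_eq)
    moreover have "indicator (E k) w = (if 2 ^ k * p \<le> \<bar>f w\<bar> then 1 else 0 :: real)" for k
      using elim by (simp add: E_def indicator_def)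
    ultimately show ?case
      using abs_le_dyadic_sum[OF p] by (simp only:)
  qed
  have int_ind: "integrable M (\<lambda>w. 2 ^ (k + 1) * p * indicator (E k) w :: real)" for k
    by (intro integrable_mult_right integrable_real_indicator) (auto simp: emeasure_eq_measure)
  have "(\<integral>w. \<bar>f w\<bar> \<partial>M) \<le> (\<integral>w. p + (\<Sum>k<N. 2 ^ (k + 1) * p * indicator (E k) w) \<partial>M)"
  proof (rule integral_mono_AE[OF integrable_abs _ pointwise])
    show "integrable M f"
      using bounded by (intro integrable_const_bound[where B = B]) auto
    show "integrable M (\<lambda>w. p + (\<Sum>k<N. 2 ^ (k + 1) * p * indicator (E k) w))"
      using int_ind by (intro Bochner_Integration.integrable_add Bochner_Integration.integrable_sum) auto
  qed
  also have "\<dots> = p + (\<Sum>k<N. 2 ^ (k + 1) * p * prob (E k))"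
    using int_ind by (simp add: integral_sum prob_space del: sum_mult_indicator)
  also have "\<dots> \<le> p + (\<Sum>k<N. 2 * p * \<theta> * q ^ k)"
    using prob_E p by (intro add_left_mono sum_mono) (auto simp: field_simps intro: mult_left_mono)
  also have "\<dots> = p + 2 * p * \<theta> * (1 - q ^ N) / (1 - q)"
    using q by (simp add: sum_distrib_left[symmetric] sum_gp_strict)
  also have "\<dots> \<le> p + 2 * p * \<theta> / (1 - q)"
    using q p \<theta> by (intro add_left_mono divide_right_mono mult_left_le) auto
  also have "\<dots> = p * (1 + 2 * \<theta> / (1 - q))"
    using q by (simp add: field_simps)
  finally show ?thesis
    by (simp add: q_def)
qed

section \<open>Bounded costs in the non-deterministic bandit\<close>

lemma Tst_0 [simp]: "Tst nx i s 0 w = 0"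
  by (simp add: Tst_def)

lemma Tst_Suc: "Tst nx i s (Suc m) w = Tst nx i s m w + (if nx i (Suc m) w = s then 1 else 0)"
proof -
  have "{k \<in> {1..Suc m}. nx i k w = s}
      = {k \<in> {1..m}. nx i k w = s} \<union> (if nx i (Suc m) w = s then {Suc m} else {})"
    by (auto simp: le_Suc_eq)
  then show ?thesis
    by (simp add: Tst_def)
qed

lemma Tst_le: "Tst nx i s m w \<le> m"
  unfolding Tst_def by (rule order.trans[OF card_mono[of "{1..m}"]]) auto

definition rho_step_bound :: "real \<Rightarrow> real \<Rightarrow> real" where
  "rho_step_bound \<beta> R = R + (exp (2 * \<beta> * R) + 1) / \<beta>"

lemma rho_step_bound_ge: "\<beta> > 0 \<Longrightarrow> R \<le> rho_step_bound \<beta> R"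
  unfolding rho_step_bound_def by (simp add: add_pos_pos)

locale bounded_nd_bandit = prob_space M
  for M :: "'w measure" +
  fixes K :: nat and S :: "nat set" and Rc Rx \<beta> \<gamma> :: real
    and c :: "nat \<Rightarrow> real" and P :: "nat \<Rightarrow> nat pmf"
    and x :: "nat \<Rightarrow> nat \<Rightarrow> nat \<Rightarrow> 'w \<Rightarrow> real" and mu_s :: "nat \<Rightarrow> nat \<Rightarrow> real"
    and nx :: "nat \<Rightarrow> nat \<Rightarrow> 'w \<Rightarrow> nat"
  assumes finite_S: "finite S" and \<beta>_pos: "\<beta> > 0" and \<gamma>_pos: "0 < \<gamma>" and \<gamma>_le_1: "\<gamma> \<le> 1"
    and c_bound: "\<And>i. i < K \<Longrightarrow> \<bar>c i\<bar> \<le> Rc"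
    and set_P: "\<And>i. i < K \<Longrightarrow> set_pmf (P i) \<subseteq> S"
    and nx_measurable: "\<And>i k. i < K \<Longrightarrow> k \<ge> 1 \<Longrightarrow> nx i k \<in> measurable M (count_space UNIV)"
    and nx_distr: "\<And>i k. i < K \<Longrightarrow> k \<ge> 1 \<Longrightarrow> distr M (count_space UNIV) (nx i k) = measure_pmf (P i)"
    and x_measurable: "\<And>i s t. i < K \<Longrightarrow> s \<in> S \<Longrightarrow> t \<ge> 1 \<Longrightarrow> x i s t \<in> borel_measurable M"
    and x_bound: "\<And>i s t w. i < K \<Longrightarrow> s \<in> S \<Longrightarrow> t \<ge> 1 \<Longrightarrow> w \<in> space M \<Longrightarrow> \<bar>x i s t w\<bar> \<le> Rx"
    and mu_s_limit: "\<And>i s. i < K \<Longrightarrow> s \<in> S \<Longrightarrow>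
      (\<lambda>n. integral\<^sup>L M (rho_s \<beta> \<gamma> x i s n)) \<longlonglongrightarrow> mu_s i s"
begin

definition cost_sum :: "nat \<Rightarrow> nat \<Rightarrow> 'w \<Rightarrow> real" where
  "cost_sum i m w = (\<Sum>s\<in>S. \<Sum>t=1..Tst nx i s m w. exp (\<beta> * (c i + \<gamma> * x i s t w)))"

lemma rho_arm_eq_cost_sum: "rho_arm \<beta> \<gamma> S c x nx i m w = ln (cost_sum i m w / real m) / \<beta>"
  unfolding rho_arm_def cost_sum_def ..

lemma cost_sum_0 [simp]: "cost_sum i 0 w = 0"
  by (simp add: cost_sum_def)

lemma cost_sum_Suc:
  assumes "nx i (Suc m) w \<in> S"
  shows "cost_sum i (Suc m) w = cost_sum i m w
    + exp (\<beta> * (c i + \<gamma> * x i (nx i (Suc m) w) (Tst nx i (nx i (Suc m) w) (Suc m) w) w))"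
proof -
  let ?f = "\<lambda>s t. exp (\<beta> * (c i + \<gamma> * x i s t w))"
  have "(\<Sum>t=1..Tst nx i s (Suc m) w. ?f s t)
      = (\<Sum>t=1..Tst nx i s m w. ?f s t) + (if nx i (Suc m) w = s then ?f s (Tst nx i s (Suc m) w) else 0)"
    for s
    by (simp add: Tst_Suc)
  then show ?thesis
    using assms finite_S by (simp add: cost_sum_def sum.distrib)
qed

lemma measurable_Tst:
  "i < K \<Longrightarrow> (\<lambda>w. Tst nx i s m w) \<in> measurable M (count_space UNIV)"
  unfolding Tst_def using nx_measurable
  by (intro measurable_card) (auto intro: measurable_count_space_eq2_countable[THEN iffD1, THEN conjunct2, rule_format])

lemma measurable_rho_arm:
  assumes "i < K"
  shows "rho_arm \<beta> \<gamma> S c x nx i m \<in> borel_measurable M"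
proof -
  have [measurable]: "(\<lambda>w. Tst nx i s m w) \<in> measurable M (count_space UNIV)" for s
    using measurable_Tst[OF assms] .
  have [measurable]: "s \<in> S \<Longrightarrow> t \<in> {1..m} \<Longrightarrow> x i s t \<in> borel_measurable M" for s t
    using x_measurable assms by auto
  have "(\<Sum>t=1..Tst nx i s m w. f t) = (\<Sum>t\<in>{1..m}. if t \<le> Tst nx i s m w then f t else 0)"
    for s w and f :: "nat \<Rightarrow> real"
  proof -
    have "{1..Tst nx i s m w} = {t \<in> {1..m}. t \<le> Tst nx i s m w}"
      using Tst_le[of nx i s m w] by auto
    then show ?thesis
      by (simp only: sum.inter_filter[OF finite_atLeastAtMost])
  qed
  then have "cost_sum i m w = (\<Sum>s\<in>S. \<Sum>t\<in>{1..m}.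
      if t \<le> Tst nx i s m w then exp (\<beta> * (c i + \<gamma> * x i s t w)) else 0)" for w
    unfolding cost_sum_def by simp
  then show ?thesis
    unfolding rho_arm_eq_cost_sum[abs_def] by simp measurable
qed

text \<open>The sampled states lie in \<open>S\<close> only almost surely; off \<open>S\<close> the costs are unconstrained.\<close>
definition admissible :: "nat \<Rightarrow> 'w \<Rightarrow> bool" where
  "admissible n w \<longleftrightarrow> w \<in> space M \<and> (\<forall>i<K. \<forall>k\<in>{1..n}. nx i k w \<in> S)"

lemma admissible_mono: "admissible n w \<Longrightarrow> m \<le> n \<Longrightarrow> admissible m w"
  unfolding admissible_def by auto

lemma AE_admissible: "AE w in M. admissible n w"
proof -
  have "AE w in M. nx i k w \<in> S" if "(i, k) \<in> {..<K} \<times> {1..n}" for i k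
  proof (rule AE_distrD[OF nx_measurable])
    show "AE s in distr M (count_space UNIV) (nx i k). s \<in> S"
      using that set_P[of i] by (subst nx_distr) (auto simp: AE_measure_pmf_iff)
  qed (use that in auto)
  then have "AE w in M. \<forall>(i, k) \<in> {..<K} \<times> {1..n}. nx i k w \<in> S"
    by (subst AE_ball_countable) (auto intro: countable_finite)
  then show ?thesis
    unfolding admissible_def by (auto elim: AE_mp)
qed

lemma exp_cost_bounds:
  assumes "i < K" and "\<bar>y\<bar> \<le> Rx"
  shows "exp (- (\<beta> * (Rc + Rx))) \<le> exp (\<beta> * (c i + \<gamma> * y))"
    and "exp (\<beta> * (c i + \<gamma> * y)) \<le> exp (\<beta> * (Rc + Rx))"
  using exp_bounds_of_abs_le[OF \<beta>_pos abs_cost_le[OF \<gamma>_pos \<gamma>_le_1 c_bound[OF assms(1)] assms(2)]]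
  by auto

lemma cost_sum_bounds:
  assumes "admissible n w" and "i < K" and "m \<le> n"
  shows "real m * exp (- (\<beta> * (Rc + Rx))) \<le> cost_sum i m w
    \<and> cost_sum i m w \<le> real m * exp (\<beta> * (Rc + Rx))"
  using assms(3)
proof (induction m)
  case 0
  then show ?case by simp
next
  case (Suc m)
  let ?s = "nx i (Suc m) w"
  have s: "?s \<in> S"
    using assms Suc.prems by (auto simp: admissible_def)
  have "\<bar>x i ?s (Tst nx i ?s (Suc m) w) w\<bar> \<le> Rx"
    using assms s by (intro x_bound) (auto simp: admissible_def Tst_Suc)
  note e = exp_cost_bounds[OF assms(2) this]
  have IH: "real m * exp (- (\<beta> * (Rc + Rx))) \<le> cost_sum i m w"
    "cost_sum i m w \<le> real m * exp (\<beta> * (Rc + Rx))"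
    using Suc by auto
  show ?case
    unfolding cost_sum_Suc[OF s] using add_mono[OF IH(1) e(1)] add_mono[OF IH(2) e(2)]
    by (simp add: distrib_right)
qed

lemma abs_rho_arm_le:
  assumes "admissible n w" and "i < K" and "1 \<le> m" and "m \<le> n"
  shows "\<bar>rho_arm \<beta> \<gamma> S c x nx i m w\<bar> \<le> Rc + Rx"
proof -
  have "\<bar>ln (cost_sum i m w / real m)\<bar> \<le> \<beta> * (Rc + Rx)"
    using cost_sum_bounds[OF assms(1,2,4)] assms(3) by (intro abs_ln_div_le) auto
  then show ?thesis
    using \<beta>_pos by (simp add: rho_arm_eq_cost_sum abs_divide pos_divide_le_eq mult.commute)
qed

lemma abs_mu_s_le:
  assumes "i < K" and "s \<in> S"
  shows "\<bar>mu_s i s\<bar> \<le> Rx"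
proof -
  have "\<bar>integral\<^sup>L M (rho_s \<beta> \<gamma> x i s n)\<bar> \<le> Rx" if "n \<ge> 1" for n
  proof -
    have bound: "\<bar>rho_s \<beta> \<gamma> x i s n w\<bar> \<le> Rx" if "w \<in> space M" for w
      unfolding rho_s_def using \<beta>_pos \<gamma>_pos \<open>n \<ge> 1\<close> assms that
      by (intro abs_ln_mean_exp_le x_bound) auto
    have [measurable]: "t \<in> {1..n} \<Longrightarrow> x i s t \<in> borel_measurable M" for t
      using x_measurable assms by auto
    have int: "integrable M (rho_s \<beta> \<gamma> x i s n)"
      using bound by (intro integrable_const_bound[where B = Rx]) (auto simp: rho_s_def[abs_def])
    have "integral\<^sup>L M (rho_s \<beta> \<gamma> x i s n) \<le> Rx"
      using bound by (intro integral_le_const[OF int] AE_I2) (auto simp: abs_le_iff)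
    moreover have "- Rx \<le> integral\<^sup>L M (rho_s \<beta> \<gamma> x i s n)"
      using bound by (intro integral_ge_const[OF int] AE_I2) (force simp: abs_le_iff)
    ultimately show ?thesis
      by (simp add: abs_le_iff)
  qed
  then show ?thesis
    using LIMSEQ_le_const2[OF tendsto_rabs[OF mu_s_limit[OF assms]]] by blast
qed

lemma abs_mu_arm_le:
  assumes "i < K"
  shows "\<bar>mu_arm \<beta> \<gamma> c P mu_s i\<bar> \<le> Rc + Rx"
proof -
  let ?E = "measure_pmf.expectation (P i) (\<lambda>s. exp (\<beta> * (c i + \<gamma> * mu_s i s)))"
  have int: "integrable (measure_pmf (P i)) (\<lambda>s. exp (\<beta> * (c i + \<gamma> * mu_s i s)))"
    using set_P[OF assms] finite_S by (intro integrable_measure_pmf_finite) (auto intro: finite_subset)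
  have "AE s in measure_pmf (P i). exp (- (\<beta> * (Rc + Rx))) \<le> exp (\<beta> * (c i + \<gamma> * mu_s i s))
      \<and> exp (\<beta> * (c i + \<gamma> * mu_s i s)) \<le> exp (\<beta> * (Rc + Rx))"
    using set_P[OF assms] exp_cost_bounds[OF assms abs_mu_s_le[OF assms]]
    by (auto simp: AE_measure_pmf_iff)
  then have "exp (- (\<beta> * (Rc + Rx))) \<le> ?E" "?E \<le> exp (\<beta> * (Rc + Rx))"
    using measure_pmf.integral_ge_const[OF int] measure_pmf.integral_le_const[OF int]
    by (auto elim: AE_mp)
  then have "\<bar>ln (?E / 1)\<bar> \<le> \<beta> * (Rc + Rx)"
    by (intro abs_ln_div_le) auto
  then show ?thesis
    using \<beta>_pos by (simp add: mu_arm_def abs_divide pos_divide_le_eq mult.commute)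
qed

lemma rho_arm_increment_le:
  assumes "admissible (Suc m) w" and i: "i < K" and "1 \<le> m"
  shows "\<bar>real (Suc m) * rho_arm \<beta> \<gamma> S c x nx i (Suc m) w - real m * rho_arm \<beta> \<gamma> S c x nx i m w\<bar>
    \<le> rho_step_bound \<beta> (Rc + Rx)"
proof -
  let ?s = "nx i (Suc m) w"
  let ?e = "exp (\<beta> * (c i + \<gamma> * x i ?s (Tst nx i ?s (Suc m) w) w))"
  let ?r = "\<beta> * (Rc + Rx)"
  have s: "?s \<in> S"
    using assms by (auto simp: admissible_def)
  have "\<bar>x i ?s (Tst nx i ?s (Suc m) w) w\<bar> \<le> Rx"
    using assms s by (intro x_bound) (auto simp: admissible_def Tst_Suc)
  note e = exp_cost_bounds[OF i this]
  define D where "D = (real m + 1) * ln ((cost_sum i m w + ?e) / (real m + 1))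
    - real m * ln (cost_sum i m w / real m)"
  have "\<bar>D\<bar> \<le> ?r + exp (2 * ?r) + 1"
    unfolding D_def using cost_sum_bounds[OF assms(1) i, of m] assms(3) e
    by (intro abs_ln_mean_increment_le) auto
  moreover have "real (Suc m) * rho_arm \<beta> \<gamma> S c x nx i (Suc m) w - real m * rho_arm \<beta> \<gamma> S c x nx i m w
      = D / \<beta>"
    by (simp add: D_def rho_arm_eq_cost_sum cost_sum_Suc[OF s] diff_divide_distrib add.commute)
  ultimately have "\<bar>real (Suc m) * rho_arm \<beta> \<gamma> S c x nx i (Suc m) w - real m * rho_arm \<beta> \<gamma> S c x nx i m w\<bar>
      \<le> (?r + exp (2 * ?r) + 1) / \<beta>"
    using \<beta>_pos by (simp add: abs_divide divide_right_mono)
  also have "\<dots> = rho_step_bound \<beta> (Rc + Rx)"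
    using \<beta>_pos by (simp add: rho_step_bound_def field_simps)
  finally show ?thesis .
qed

lemma rho_arm_lipschitz:
  assumes "admissible n w" and "i < K" and "m \<le> n"
  shows "\<bar>real n * rho_arm \<beta> \<gamma> S c x nx i n w - real m * rho_arm \<beta> \<gamma> S c x nx i m w\<bar>
    \<le> rho_step_bound \<beta> (Rc + Rx) * (real n - real m)"
proof (cases "m = 0")
  case True
  show ?thesis
  proof (cases "n = 0")
    case False
    then have "\<bar>rho_arm \<beta> \<gamma> S c x nx i n w\<bar> \<le> rho_step_bound \<beta> (Rc + Rx)"
      using abs_rho_arm_le[OF assms(1,2), of n] rho_step_bound_ge[OF \<beta>_pos, of "Rc + Rx"] by simp
    then show ?thesis
      using True by (simp add: abs_mult mult.commute mult_left_mono)
  qed (use True in simp)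
next
  case False
  show ?thesis
    using assms(3,1)
  proof (induction n rule: dec_induct)
    case base
    then show ?case by simp
  next
    case (step k)
    have "\<bar>real (Suc k) * rho_arm \<beta> \<gamma> S c x nx i (Suc k) w - real k * rho_arm \<beta> \<gamma> S c x nx i k w\<bar>
        \<le> rho_step_bound \<beta> (Rc + Rx)"
      using step False assms(2) by (intro rho_arm_increment_le) auto
    moreover have "\<bar>real k * rho_arm \<beta> \<gamma> S c x nx i k w - real m * rho_arm \<beta> \<gamma> S c x nx i m w\<bar>
        \<le> rho_step_bound \<beta> (Rc + Rx) * (real k - real m)"
      using step admissible_mono[of "Suc k" w k] by auto
    ultimately show ?case
      by (simp add: algebra_simps)
  qed
qed

end

section \<open>The UCB algorithm\<close>

lemma Tarm_0 [simp]: "Tarm a i 0 w = 0"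
  by (simp add: Tarm_def)

lemma Tarm_Suc: "Tarm a i (Suc n) w = Tarm a i n w + (if a (Suc n) w = i then 1 else 0)"
proof -
  have "{t \<in> {1..Suc n}. a t w = i}
      = {t \<in> {1..n}. a t w = i} \<union> (if a (Suc n) w = i then {Suc n} else {})"
    by (auto simp: le_Suc_eq)
  then show ?thesis
    by (simp add: Tarm_def)
qed

lemma Tarm_le: "Tarm a i n w \<le> n"
  unfolding Tarm_def by (rule order.trans[OF card_mono[of "{1..n}"]]) auto

lemma Tarm_last_selection:
  assumes "Tarm a i n w \<ge> 1"
  shows "\<exists>t\<in>{1..n}. a t w = i \<and> Tarm a i (t - 1) w + 1 = Tarm a i n w"
  using assms
proof (induction n)
  case 0
  then show ?case by simp
next
  case (Suc n)
  then show ?case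
    by (cases "a (Suc n) w = i") (force simp: Tarm_Suc)+
qed

(* The constants of the proof: A = pull_offset bounds the pulls of a suboptimal arm as
   A n^eta' + v, tail_start is the level z0 from which on the union-bound argument applies, and
   ucb_tail_const is the constant theta' of the theorem. *)
definition pull_cost :: "real \<Rightarrow> real \<Rightarrow> real" where
  "pull_cost \<beta> R = rho_step_bound \<beta> R + 3 * R"

definition pull_offset :: "real \<Rightarrow> real \<Rightarrow> real \<Rightarrow> real \<Rightarrow> real" where
  "pull_offset \<theta>L \<xi> \<eta> \<Delta> = (2 * \<theta>L powr (1 / \<xi>) / \<Delta>) powr (1 / (1 - \<eta>))"

definition tail_scale :: "real \<Rightarrow> real \<Rightarrow> nat \<Rightarrow> real" where
  "tail_scale \<beta> R K = 4 * pull_cost \<beta> R * (real K - 1)"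

definition tail_start :: "real \<Rightarrow> real \<Rightarrow> nat \<Rightarrow> real \<Rightarrow> real \<Rightarrow> real \<Rightarrow> real \<Rightarrow> real" where
  "tail_start \<beta> R K \<theta>L \<xi> \<eta> \<Delta> = max 2 (tail_scale \<beta> R K * (pull_offset \<theta>L \<xi> \<eta> \<Delta> + 1))"

definition ucb_tail_const ::
  "real \<Rightarrow> real \<Rightarrow> nat \<Rightarrow> real \<Rightarrow> real \<Rightarrow> real \<Rightarrow> real \<Rightarrow> real \<Rightarrow> real" where
  "ucb_tail_const \<beta> R K \<theta>L \<xi> \<eta> \<alpha> \<Delta> = tail_start \<beta> R K \<theta>L \<xi> \<eta> \<Delta> powr (\<alpha> - 1)
     + \<theta>L * 2 powr \<xi> + 2 * (real K + 1) * (2 * tail_scale \<beta> R K) powr (\<alpha> - 1)"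

lemma ucb_tail_const_gt_1:
  assumes "\<alpha> > 2" and "\<theta>L > 0"
  shows "ucb_tail_const \<beta> R K \<theta>L \<xi> \<eta> \<alpha> \<Delta> > 1"
proof -
  have "1 \<le> tail_start \<beta> R K \<theta>L \<xi> \<eta> \<Delta> powr (\<alpha> - 1)"
    using assms by (intro ge_one_powr_ge_zero) (auto simp: tail_start_def)
  moreover have "0 < \<theta>L * 2 powr \<xi>"
    using assms by simp
  moreover have "0 \<le> 2 * (real K + 1) * (2 * tail_scale \<beta> R K) powr (\<alpha> - 1)"
    by simp
  ultimately show ?thesis
    unfolding ucb_tail_const_def by linarith
qed

lemma mult_bonus:
  assumes "s \<ge> 1"
  shows "real s * bonus \<theta>L \<xi> \<alpha> \<eta> t s = real s powr \<eta> * (\<theta>L powr (1 / \<xi>) * real t powr (\<alpha> / \<xi>))"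
proof -
  have "real s / real s powr (1 - \<eta>) = real s powr \<eta>"
    using powr_diff[of "real s" 1 "1 - \<eta>"] assms by simp
  moreover have "real s * bonus \<theta>L \<xi> \<alpha> \<eta> t s
      = real s / real s powr (1 - \<eta>) * (\<theta>L powr (1 / \<xi>) * real t powr (\<alpha> / \<xi>))"
    unfolding bonus_def by simp
  ultimately show ?thesis
    by simp
qed

locale ucb_run = bounded_nd_bandit M K S Rc Rx \<beta> \<gamma> c P x mu_s nx
  for M :: "'w measure" and K S Rc Rx \<beta> \<gamma> c P x mu_s nx +
  fixes \<xi> \<eta> \<alpha> \<theta>L \<Delta>min :: real and a :: "nat \<Rightarrow> 'w \<Rightarrow> nat" and istar :: nat
  assumes \<xi>_gt_1: "\<xi> > 1" and \<eta>_ge_half: "1 / 2 \<le> \<eta>" and \<eta>_lt_1: "\<eta> < 1" and \<alpha>_gt_2: "\<alpha> > 2"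
    and \<alpha>_lower: "\<xi> * \<eta> * (1 - \<eta>) \<le> \<alpha>" and \<alpha>_upper: "\<alpha> < \<xi> * (1 - \<eta>)"
    and \<theta>L_gt_1: "\<theta>L > 1" and K_ge_2: "K \<ge> 2"
    and arm_tails: "\<And>i z n. i < K \<Longrightarrow> z \<ge> 1 \<Longrightarrow> n \<ge> 1 \<Longrightarrow>
      measure M {w \<in> space M. real n * rho_arm \<beta> \<gamma> S c x nx i n w
        - real n * mu_arm \<beta> \<gamma> c P mu_s i \<ge> real n powr \<eta> * z} \<le> \<theta>L / z powr \<xi> \<and>
      measure M {w \<in> space M. real n * rho_arm \<beta> \<gamma> S c x nx i n w
        - real n * mu_arm \<beta> \<gamma> c P mu_s i \<le> - (real n powr \<eta> * z)} \<le> \<theta>L / z powr \<xi>"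
    and istar_lt_K: "istar < K"
    and istar_optimal: "\<And>i. i < K \<Longrightarrow> i \<noteq> istar \<Longrightarrow>
      mu_arm \<beta> \<gamma> c P mu_s istar < mu_arm \<beta> \<gamma> c P mu_s i"
    and \<Delta>min_eq: "\<Delta>min = Min ((\<lambda>i. mu_arm \<beta> \<gamma> c P mu_s i - mu_arm \<beta> \<gamma> c P mu_s istar)
      ` ({..<K} - {istar}))"
    and policy: "ucb_policy M K \<beta> \<gamma> S c x nx \<theta>L \<xi> \<alpha> \<eta> a"
begin

abbreviation "rho i m w \<equiv> rho_arm \<beta> \<gamma> S c x nx i m w"
abbreviation "mu i \<equiv> mu_arm \<beta> \<gamma> c P mu_s i"
abbreviation "T i n w \<equiv> Tarm a i n w"
abbreviation "dev i m w \<equiv> real m * rho i m w - real m * mu i"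
abbreviation "\<eta>' \<equiv> \<alpha> / (\<xi> * (1 - \<eta>))"
abbreviation "A \<equiv> pull_offset \<theta>L \<xi> \<eta> \<Delta>min"

lemma a_init: "t \<in> {1..K} \<Longrightarrow> w \<in> space M \<Longrightarrow> a t w = t - 1"
  using policy unfolding ucb_policy_def by auto

lemma a_lt_K: "1 \<le> t \<Longrightarrow> w \<in> space M \<Longrightarrow> a t w < K"
  using policy unfolding ucb_policy_def by (cases "t \<le> K") auto

lemma a_minimises_index:
  "K < t \<Longrightarrow> w \<in> space M \<Longrightarrow> j < K \<Longrightarrow>
    ucb_index \<beta> \<gamma> S c x nx \<theta>L \<xi> \<alpha> \<eta> a (a t w) t w \<le> ucb_index \<beta> \<gamma> S c x nx \<theta>L \<xi> \<alpha> \<eta> a j t w"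
  using policy unfolding ucb_policy_def by auto

lemma measurable_a [measurable]: "a t \<in> measurable M (count_space UNIV)"
  using policy unfolding ucb_policy_def by auto

lemma sum_Tarm: "w \<in> space M \<Longrightarrow> (\<Sum>i<K. T i n w) = n"
proof (induction n)
  case 0
  then show ?case by simp
next
  case (Suc n)
  then show ?case
    using a_lt_K[of "Suc n" w] by (simp add: Tarm_Suc sum.distrib)
qed

lemma Tarm_before_first_pull:
  assumes "t \<in> {1..K}" and "w \<in> space M"
  shows "T (t - 1) (t - 1) w = 0"
proof -
  have "{t' \<in> {1..t - 1}. a t' w = t - 1} = {}"
    using assms a_init[of _ w] by force
  then show ?thesis
    unfolding Tarm_def by simp
qed

lemma Tarm_istar_pos:
  assumes "K < t" and "w \<in> space M"
  shows "1 \<le> T istar (t - 1) w"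
proof -
  have "istar + 1 \<in> {t' \<in> {1..t - 1}. a t' w = istar}"
    using assms istar_lt_K a_init[of "istar + 1" w] by auto
  then have "{t' \<in> {1..t - 1}. a t' w = istar} \<noteq> {}"
    by blast
  then show ?thesis
    unfolding Tarm_def by (simp add: Suc_le_eq card_gt_0_iff)
qed

lemma pulled_again_after_init:
  assumes "w \<in> space M" and "1 \<le> t" and "1 \<le> T (a t w) (t - 1) w"
  shows "K < t"
proof (rule ccontr)
  assume "\<not> K < t"
  then have "t \<in> {1..K}"
    using assms(2) by auto
  then show False
    using a_init[OF _ assms(1)] Tarm_before_first_pull[OF _ assms(1)] assms(3) by simp
qed

lemma \<Delta>min_pos: "\<Delta>min > 0"
  and \<Delta>min_le: "\<And>i. i < K \<Longrightarrow> i \<noteq> istar \<Longrightarrow> \<Delta>min \<le> mu i - mu istar"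
proof -
  have "(if istar = 0 then 1 else 0) \<in> {..<K} - {istar}"
    using K_ge_2 by auto
  then have "{..<K} - {istar} \<noteq> {}"
    by blast
  then show "\<Delta>min > 0"
    unfolding \<Delta>min_eq using istar_optimal by (subst Min_gr_iff) auto
  show "\<And>i. i < K \<Longrightarrow> i \<noteq> istar \<Longrightarrow> \<Delta>min \<le> mu i - mu istar"
    unfolding \<Delta>min_eq by (intro Min_le) auto
qed

lemma \<xi>_mult_pos: "0 < \<xi> * (1 - \<eta>)"
  using \<xi>_gt_1 \<eta>_lt_1 by simp

lemma \<eta>_le_\<eta>': "\<eta> \<le> \<eta>'"
proof -
  have "\<eta> * (\<xi> * (1 - \<eta>)) \<le> \<alpha>"
    using \<alpha>_lower by (simp add: ac_simps)
  then show ?thesis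
    using \<xi>_mult_pos by (simp add: pos_le_divide_eq)
qed

lemma \<eta>'_lt_1: "\<eta>' < 1"
  using \<alpha>_upper \<xi>_mult_pos by simp

lemma one_le_powr_\<eta>': "n \<ge> 1 \<Longrightarrow> 1 \<le> real n powr \<eta>'"
  using \<eta>_le_\<eta>' \<eta>_ge_half by (intro ge_one_powr_ge_zero) auto

lemma bonus_le_half_gap:
  assumes "s \<ge> 1" and "A * real n powr \<eta>' \<le> real s" and "1 \<le> t" and "t \<le> n"
  shows "bonus \<theta>L \<xi> \<alpha> \<eta> t s \<le> \<Delta>min / 2"
proof -
  let ?B = "\<theta>L powr (1 / \<xi>)"
  have B: "?B > 0"
    using \<theta>L_gt_1 by simp
  have "(2 * ?B / \<Delta>min) * real t powr (\<alpha> / \<xi>) \<le> (2 * ?B / \<Delta>min) * real n powr (\<alpha> / \<xi>)"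
    using assms \<xi>_gt_1 \<alpha>_gt_2 B \<Delta>min_pos by (intro mult_left_mono powr_mono2) auto
  also have "\<dots> = A powr (1 - \<eta>) * real n powr (\<eta>' * (1 - \<eta>))"
    using \<eta>_lt_1 \<xi>_gt_1 B \<Delta>min_pos by (simp add: pull_offset_def powr_powr)
  also have "\<dots> = (A * real n powr \<eta>') powr (1 - \<eta>)"
    by (simp add: pull_offset_def powr_mult powr_powr)
  also have "\<dots> \<le> real s powr (1 - \<eta>)"
    using assms \<eta>_lt_1 by (intro powr_mono2) (auto simp: pull_offset_def)
  finally have "?B * real t powr (\<alpha> / \<xi>) \<le> \<Delta>min / 2 * real s powr (1 - \<eta>)"
    using \<Delta>min_pos by (simp add: field_simps)
  then show ?thesis
    using assms(1) by (simp add: bonus_def pos_divide_le_eq)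
qed

text \<open>With \<open>z = \<theta>L powr (1 / \<xi>) * max v s powr (\<alpha> / \<xi>)\<close> the arm tail bound
  \<open>\<theta>L / z powr \<xi>\<close> becomes \<open>max v s powr (- \<alpha>)\<close>, which is summable over \<open>s\<close>.\<close>
definition thr :: "nat \<Rightarrow> nat \<Rightarrow> real" where
  "thr v s = real s powr \<eta> * (\<theta>L powr (1 / \<xi>) * real (max v s) powr (\<alpha> / \<xi>))"

lemma thr_le:
  assumes "v \<le> t" and "s \<le> t"
  shows "thr v s \<le> real s powr \<eta> * (\<theta>L powr (1 / \<xi>) * real t powr (\<alpha> / \<xi>))"
  unfolding thr_def using assms \<xi>_gt_1 \<alpha>_gt_2
  by (intro mult_left_mono powr_mono2) auto

definition dev_event :: "real \<Rightarrow> nat \<Rightarrow> nat \<Rightarrow> nat \<Rightarrow> 'w set" where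
  "dev_event \<sigma> j v n = {w \<in> space M. \<exists>s\<in>{1..n}. thr v s \<le> \<sigma> * dev j s w}"

text \<open>The UCB argument: at the last pull of a much-pulled suboptimal arm \<open>i\<close>, its index was
  below that of \<open>istar\<close>; since by then the bonus of \<open>i\<close> is below half the gap, either \<open>istar\<close>
  was overestimated or \<open>i\<close> underestimated by more than the bonus.\<close>
lemma many_pulls_imply_deviation:
  assumes w: "w \<in> space M" and i: "i < K" "i \<noteq> istar" and v: "v \<ge> 1"
    and many: "A * real n powr \<eta>' + real v + 1 \<le> real (T i n w)"
  shows "w \<in> dev_event 1 istar v n \<union> dev_event (- 1) i v n"
proof -
  have A: "0 \<le> A * real n powr \<eta>'"
    by (simp add: pull_offset_def)
  then obtain t where t: "t \<in> {1..n}" "a t w = i" "T i (t - 1) w + 1 = T i n w"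
    using Tarm_last_selection[of a i n w] many v by auto
  define s where "s = T i (t - 1) w"
  define s' where "s' = T istar (t - 1) w"
  have s: "A * real n powr \<eta>' + real v \<le> real s" "1 \<le> s" "s \<le> t - 1"
    using many t(3) A v Tarm_le[of a i "t - 1" w] by (auto simp: s_def)
  have "K < t"
    using pulled_again_after_init[OF w, of t] t s(2) by (simp add: s_def)
  have s': "1 \<le> s'" "s' \<le> t - 1"
    using Tarm_istar_pos[OF \<open>K < t\<close> w] Tarm_le[of a istar "t - 1" w] by (auto simp: s'_def)
  have "v \<le> t" "s \<le> t" "s' \<le> t"
    using s s' A by linarith+
  have index: "rho i s w - bonus \<theta>L \<xi> \<alpha> \<eta> t s \<le> rho istar s' w - bonus \<theta>L \<xi> \<alpha> \<eta> t s'"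
    using a_minimises_index[OF \<open>K < t\<close> w istar_lt_K] t(2) by (simp add: ucb_index_def s_def s'_def)
  show ?thesis
  proof (cases "mu istar < rho istar s' w - bonus \<theta>L \<xi> \<alpha> \<eta> t s'")
    case True
    then have "real s' * bonus \<theta>L \<xi> \<alpha> \<eta> t s' \<le> dev istar s' w"
      using s' mult_left_mono[of "bonus \<theta>L \<xi> \<alpha> \<eta> t s'" "rho istar s' w - mu istar" "real s'"]
      by (simp add: right_diff_distrib)
    then have "thr v s' \<le> dev istar s' w"
      using thr_le[OF \<open>v \<le> t\<close> \<open>s' \<le> t\<close>] mult_bonus[OF s'(1)] by simp
    then show ?thesis
      using s' t(1) w by (auto simp: dev_event_def)
  next
    case False
    have "bonus \<theta>L \<xi> \<alpha> \<eta> t s \<le> \<Delta>min / 2"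
      using s t(1) A by (intro bonus_le_half_gap[where n = n]) auto
    then have "rho i s w - mu i \<le> - bonus \<theta>L \<xi> \<alpha> \<eta> t s"
      using False index \<Delta>min_le[OF i] by linarith
    then have "real s * bonus \<theta>L \<xi> \<alpha> \<eta> t s \<le> - dev i s w"
      using s(2) mult_left_mono[of "rho i s w - mu i" "- bonus \<theta>L \<xi> \<alpha> \<eta> t s" "real s"]
      by (simp add: right_diff_distrib)
    then have "thr v s \<le> - 1 * dev i s w"
      using thr_le[OF \<open>v \<le> t\<close> \<open>s \<le> t\<close>] mult_bonus[OF s(2)] by simp
    then show ?thesis
      using s t(1) w by (auto simp: dev_event_def)
  qed
qed

lemma arm_tail_signed:
  assumes "\<sigma> \<in> {- 1, 1}" and "j < K" and "z \<ge> 1" and "s \<ge> 1"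
  shows "prob {w \<in> space M. real s powr \<eta> * z \<le> \<sigma> * dev j s w} \<le> \<theta>L / z powr \<xi>"
proof -
  have "{w \<in> space M. real s powr \<eta> * z \<le> - 1 * dev j s w}
      = {w \<in> space M. dev j s w \<le> - (real s powr \<eta> * z)}"
    by auto
  then show ?thesis
    using assms arm_tails[OF assms(2-4)] by auto
qed

lemma prob_dev_event_le:
  assumes \<sigma>: "\<sigma> \<in> {- 1, 1}" and j: "j < K" and v: "v \<ge> 1"
  shows "prob (dev_event \<sigma> j v n) \<le> 2 * real v powr (1 - \<alpha>)"
proof -
  let ?z = "\<lambda>s. \<theta>L powr (1 / \<xi>) * real (max v s) powr (\<alpha> / \<xi>)"
  have z: "1 \<le> ?z s" and z_powr: "\<theta>L / ?z s powr \<xi> = real (max v s) powr (- \<alpha>)" for s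
  proof -
    have "1 \<le> \<theta>L powr (1 / \<xi>)" "1 \<le> real (max v s) powr (\<alpha> / \<xi>)"
      using \<theta>L_gt_1 \<xi>_gt_1 \<alpha>_gt_2 v by (auto intro!: ge_one_powr_ge_zero)
    then show "1 \<le> ?z s"
      using mult_mono[of 1 "\<theta>L powr (1 / \<xi>)" 1 "real (max v s) powr (\<alpha> / \<xi>)"] by simp
    have "?z s powr \<xi> = \<theta>L * real (max v s) powr \<alpha>"
      using \<theta>L_gt_1 \<xi>_gt_1 v by (simp add: powr_mult powr_powr)
    then show "\<theta>L / ?z s powr \<xi> = real (max v s) powr (- \<alpha>)"
      using \<theta>L_gt_1 by (simp add: powr_minus_divide)
  qed
  have union: "dev_event \<sigma> j v n = (\<Union>s\<in>{1..n}. {w \<in> space M. real s powr \<eta> * ?z s \<le> \<sigma> * dev j s w})"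
    unfolding dev_event_def thr_def by auto
  have "prob (dev_event \<sigma> j v n)
      \<le> (\<Sum>s\<in>{1..n}. prob {w \<in> space M. real s powr \<eta> * ?z s \<le> \<sigma> * dev j s w})"
  proof -
    have [measurable]: "rho j m \<in> borel_measurable M" for m
      using measurable_rho_arm[OF j] .
    have "{w \<in> space M. real s powr \<eta> * ?z s \<le> \<sigma> * dev j s w} \<in> sets M" for s
      by measurable
    then show ?thesis
      unfolding union by (intro finite_measure_subadditive_finite) auto
  qed
  also have "\<dots> \<le> (\<Sum>s=1..n. real (max v s) powr (- \<alpha>))"
    using arm_tail_signed[OF \<sigma> j z] z_powr by (intro sum_mono) auto
  also have "\<dots> \<le> 2 * real v powr (1 - \<alpha>)"
    using sum_powr_max_le[OF v] \<alpha>_gt_2 by simp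
  finally show ?thesis .
qed

abbreviation "dev_avg n w \<equiv> real n * rho_bar K \<beta> \<gamma> S c x nx a n w - real n * mu istar"
abbreviation "subopt_pulls n w \<equiv> \<Sum>i\<in>{..<K} - {istar}. real (T i n w)"
abbreviation "\<Lambda> \<equiv> pull_cost \<beta> (Rc + Rx)"
abbreviation "\<kappa> \<equiv> tail_scale \<beta> (Rc + Rx) K"
abbreviation "z0 \<equiv> tail_start \<beta> (Rc + Rx) K \<theta>L \<xi> \<eta> \<Delta>min"
abbreviation "\<theta>' \<equiv> ucb_tail_const \<beta> (Rc + Rx) K \<theta>L \<xi> \<eta> \<alpha> \<Delta>min"

lemma R_nonneg: "0 \<le> Rc + Rx"
  using abs_mu_arm_le[OF istar_lt_K] by linarith

lemma pull_cost_pos: "\<Lambda> > 0"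
proof -
  have "0 < (exp (2 * \<beta> * (Rc + Rx)) + 1) / \<beta>"
    using \<beta>_pos by (intro divide_pos_pos add_pos_pos) auto
  then show ?thesis
    using R_nonneg by (simp add: pull_cost_def rho_step_bound_def)
qed

lemma tail_scale_pos: "\<kappa> > 0"
  using pull_cost_pos K_ge_2 by (simp add: tail_scale_def)

lemma sets_dev_event [measurable]: "j < K \<Longrightarrow> dev_event \<sigma> j v n \<in> sets M"
proof -
  assume j: "j < K"
  have [measurable]: "rho j m \<in> borel_measurable M" for m
    using measurable_rho_arm[OF j] .
  show ?thesis
    unfolding dev_event_def by measurable
qed

lemma dev_avg_decomposition:
  assumes adm: "admissible n w" and n: "n \<ge> 1"
  shows "\<bar>dev_avg n w - dev istar n w\<bar> \<le> \<Lambda> * subopt_pulls n w"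
proof -
  let ?R = "Rc + Rx"
  let ?Y = "\<lambda>i. real (T i n w) * (rho i (T i n w) w - mu istar)"
  have w: "w \<in> space M"
    using adm by (simp add: admissible_def)
  have n_split: "real n = real (T istar n w) + subopt_pulls n w"
    using sum_Tarm[OF w, of n] istar_lt_K
    by (simp add: sum.remove[of "{..<K}" istar] flip: of_nat_sum)
  have "dev_avg n w = (\<Sum>i<K. real (T i n w) * rho i (T i n w) w) - (\<Sum>i<K. real (T i n w)) * mu istar"
    using n sum_Tarm[OF w, of n] by (simp add: rho_bar_def flip: of_nat_sum)
  also have "\<dots> = ?Y istar + (\<Sum>i\<in>{..<K} - {istar}. ?Y i)"
    using istar_lt_K by (simp add: sum.remove sum_distrib_right distrib_right right_diff_distrib sum_subtractf)
  finally have split: "dev_avg n w = ?Y istar + (\<Sum>i\<in>{..<K} - {istar}. ?Y i)" .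
  have "\<bar>?Y i\<bar> \<le> 2 * ?R * real (T i n w)" if "i < K" for i
  proof (cases "T i n w = 0")
    case False
    then have "\<bar>rho i (T i n w) w - mu istar\<bar> \<le> 2 * ?R"
      using abs_rho_arm_le[OF adm that, of "T i n w"] Tarm_le[of a i n w] abs_mu_arm_le[OF istar_lt_K]
      by (simp add: abs_le_iff)
    then show ?thesis
      by (simp add: abs_mult mult.commute mult_left_mono)
  qed simp
  then have others: "\<bar>\<Sum>i\<in>{..<K} - {istar}. ?Y i\<bar> \<le> 2 * ?R * subopt_pulls n w"
    by (auto simp: sum_distrib_left intro!: order.trans[OF sum_abs] sum_mono)
  have "\<bar>real (T istar n w) * rho istar (T istar n w) w - real n * rho istar n w\<bar>
      \<le> rho_step_bound \<beta> ?R * subopt_pulls n w"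
    using rho_arm_lipschitz[OF adm istar_lt_K Tarm_le[of a istar n w]] n_split
    by (simp add: abs_minus_commute)
  moreover have "\<bar>(real n - real (T istar n w)) * mu istar\<bar> \<le> subopt_pulls n w * ?R"
    using n_split abs_mu_arm_le[OF istar_lt_K] sum_nonneg[of "{..<K} - {istar}" "\<lambda>i. real (T i n w)"]
    by (simp add: abs_mult mult_left_mono)
  ultimately have "\<bar>?Y istar - dev istar n w\<bar> \<le> (rho_step_bound \<beta> ?R + ?R) * subopt_pulls n w"
    by (simp add: algebra_simps abs_le_iff)
  with split others show ?thesis
    unfolding pull_cost_def by (simp add: algebra_simps abs_le_iff)
qed

lemma many_subopt_pulls_imply_deviation:
  assumes w: "w \<in> space M" and v: "v \<ge> 1"
    and many: "(real K - 1) * (A * real n powr \<eta>' + real v + 1) < subopt_pulls n w"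
  shows "w \<in> dev_event 1 istar v n \<union> (\<Union>i<K. dev_event (- 1) i v n)"
proof -
  have "\<exists>i\<in>{..<K} - {istar}. A * real n powr \<eta>' + real v + 1 \<le> real (T i n w)"
  proof (rule ccontr)
    assume "\<not> ?thesis"
    then have "subopt_pulls n w \<le> real (card ({..<K} - {istar})) * (A * real n powr \<eta>' + real v + 1)"
      by (intro sum_bounded_above) (auto simp: not_le less_imp_le)
    then show False
      using many istar_lt_K by (simp add: of_nat_diff)
  qed
  then obtain i where "i < K" "i \<noteq> istar" "A * real n powr \<eta>' + real v + 1 \<le> real (T i n w)"
    by auto
  then show ?thesis
    using many_pulls_imply_deviation[OF w _ _ v] by blast
qed

lemma pull_budget:
  assumes z: "z0 \<le> z" and n: "n \<ge> 1"
  defines "v \<equiv> nat \<lfloor>z / \<kappa>\<rfloor>"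
  shows "1 \<le> v" and "z / (2 * \<kappa>) \<le> real v"
    and "\<Lambda> * ((real K - 1) * (A * real n powr \<eta>' + real v + 1)) \<le> real n powr \<eta>' * z / 2"
proof -
  have A: "0 \<le> A"
    by (simp add: pull_offset_def)
  have zA: "A + 1 \<le> z / \<kappa>"
    using z tail_scale_pos by (simp add: tail_start_def field_simps)
  then have z1: "1 \<le> z / \<kappa>"
    using A by linarith
  then show "1 \<le> v"
    by (simp add: v_def le_nat_iff)
  then have "z / \<kappa> \<le> 2 * real v"
    using z1 by (simp add: v_def of_nat_nat) linarith
  moreover have "z / (2 * \<kappa>) = (z / \<kappa>) / 2"
    by simp
  ultimately show "z / (2 * \<kappa>) \<le> real v"
    by linarith
  have v_le: "real v \<le> z / \<kappa>"
    using z1 by (simp add: v_def of_nat_nat)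
  let ?p = "real n powr \<eta>'"
  have p: "1 \<le> ?p"
    using one_le_powr_\<eta>'[OF n] .
  have "A * ?p + real v + 1 \<le> A * ?p + (z / \<kappa>) * ?p + ?p"
    using v_le p z1 mult_left_mono[OF p, of "z / \<kappa>"] by linarith
  also have "\<dots> = (A + 1) * ?p + (z / \<kappa>) * ?p"
    by (simp add: algebra_simps)
  also have "\<dots> \<le> (z / \<kappa>) * ?p + (z / \<kappa>) * ?p"
    using mult_right_mono[OF zA, of ?p] p by linarith
  also have "\<dots> = 2 * (z / \<kappa>) * ?p"
    by simp
  finally have "\<Lambda> * ((real K - 1) * (A * ?p + real v + 1)) \<le> \<Lambda> * ((real K - 1) * (2 * (z / \<kappa>) * ?p))"
    using pull_cost_pos K_ge_2 by (intro mult_left_mono) auto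
  also have "\<dots> = ?p * z / 2"
    using pull_cost_pos K_ge_2 by (simp add: tail_scale_def field_simps)
  finally show "\<Lambda> * ((real K - 1) * (A * ?p + real v + 1)) \<le> ?p * z / 2" .
qed

lemma dev_avg_large_implies_deviation:
  assumes adm: "admissible n w" and n: "n \<ge> 1" and \<sigma>: "\<sigma> \<in> {- 1, 1}" and v: "v \<ge> 1" and z: "0 \<le> z"
    and budget: "\<Lambda> * ((real K - 1) * (A * real n powr \<eta>' + real v + 1)) \<le> real n powr \<eta>' * z / 2"
    and large: "real n powr \<eta>' * z \<le> \<sigma> * dev_avg n w"
  shows "w \<in> dev_event 1 istar v n \<union> (\<Union>i<K. dev_event (- 1) i v n)
    \<or> real n powr \<eta> * (z / 2) \<le> \<sigma> * dev istar n w"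
proof (rule disjCI)
  assume "\<not> real n powr \<eta> * (z / 2) \<le> \<sigma> * dev istar n w"
  moreover have "real n powr \<eta> * (z / 2) \<le> real n powr \<eta>' * (z / 2)"
    using n z \<eta>_le_\<eta>' by (intro mult_right_mono powr_mono) auto
  moreover have "\<sigma> * dev_avg n w - \<sigma> * dev istar n w \<le> \<Lambda> * subopt_pulls n w"
    using dev_avg_decomposition[OF adm n] \<sigma> by (auto simp: abs_le_iff)
  ultimately have "\<Lambda> * ((real K - 1) * (A * real n powr \<eta>' + real v + 1)) < \<Lambda> * subopt_pulls n w"
    using budget large by linarith
  then have "(real K - 1) * (A * real n powr \<eta>' + real v + 1) < subopt_pulls n w"
    using pull_cost_pos by simp
  then show "w \<in> dev_event 1 istar v n \<union> (\<Union>i<K. dev_event (- 1) i v n)"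
    using many_subopt_pulls_imply_deviation adm v by (simp add: admissible_def)
qed

lemma measurable_Tarm [measurable]: "(\<lambda>w. T i n w) \<in> measurable M (count_space UNIV)"
  unfolding Tarm_def by (intro measurable_card) measurable

lemma measurable_rho_bar [measurable]: "rho_bar K \<beta> \<gamma> S c x nx a n \<in> borel_measurable M"
proof -
  have [measurable]: "(\<lambda>w. rho i (T i n w) w) \<in> borel_measurable M" if "i < K" for i
    by (rule measurable_compose_countable[OF measurable_rho_arm[OF that] measurable_Tarm])
  show ?thesis
    unfolding rho_bar_def[abs_def] by measurable
qed

lemma prob_dev_avg_tail_large:
  assumes \<sigma>: "\<sigma> \<in> {- 1, 1}" and n: "n \<ge> 1" and z: "z0 \<le> z"
  shows "prob {w \<in> space M. real n powr \<eta>' * z \<le> \<sigma> * dev_avg n w}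
    \<le> (\<theta>L * 2 powr \<xi> + 2 * (real K + 1) * (2 * \<kappa>) powr (\<alpha> - 1)) / z powr (\<alpha> - 1)"
proof -
  define v where "v = nat \<lfloor>z / \<kappa>\<rfloor>"
  have v: "1 \<le> v" "z / (2 * \<kappa>) \<le> real v"
    and budget: "\<Lambda> * ((real K - 1) * (A * real n powr \<eta>' + real v + 1)) \<le> real n powr \<eta>' * z / 2"
    using pull_budget[OF z n] unfolding v_def by auto
  have z2: "2 \<le> z"
    using z by (simp add: tail_start_def)
  have [measurable]: "rho istar m \<in> borel_measurable M" for m
    using measurable_rho_arm[OF istar_lt_K] .
  let ?E = "{w \<in> space M. real n powr \<eta>' * z \<le> \<sigma> * dev_avg n w}"
  let ?F = "{w \<in> space M. real n powr \<eta> * (z / 2) \<le> \<sigma> * dev istar n w}"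
  let ?D = "\<Union>i<K. dev_event (- 1) i v n"
  have sets: "?F \<in> sets M" "?D \<in> sets M"
    by measurable
  have "AE w in M. w \<in> ?E \<longrightarrow> w \<in> dev_event 1 istar v n \<union> ?D \<union> ?F"
    using AE_admissible[of n]
  proof eventually_elim
    case (elim w)
    then show ?case
      using dev_avg_large_implies_deviation[OF elim n \<sigma> v(1) _ budget] z2 by (auto simp: admissible_def)
  qed
  then have "prob ?E \<le> prob (dev_event 1 istar v n \<union> ?D \<union> ?F)"
    using sets istar_lt_K by (intro finite_measure_mono_AE) auto
  also have "\<dots> \<le> prob (dev_event 1 istar v n) + prob ?D + prob ?F"
    using sets istar_lt_K by (smt (verit) measure_Un_le sets.Un sets_dev_event)
  also have "\<dots> \<le> 2 * real v powr (1 - \<alpha>) + real K * (2 * real v powr (1 - \<alpha>)) + \<theta>L / (z / 2) powr \<xi>"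
  proof (intro add_mono)
    show "prob (dev_event 1 istar v n) \<le> 2 * real v powr (1 - \<alpha>)"
      using prob_dev_event_le[OF _ istar_lt_K v(1)] by simp
    have "prob ?D \<le> (\<Sum>i<K. prob (dev_event (- 1) i v n))"
      by (intro finite_measure_subadditive_finite) auto
    also have "\<dots> \<le> (\<Sum>i<K. 2 * real v powr (1 - \<alpha>))"
      using prob_dev_event_le[OF _ _ v(1)] by (intro sum_mono) auto
    also have "\<dots> = real K * (2 * real v powr (1 - \<alpha>))"
      by simp
    finally show "prob ?D \<le> real K * (2 * real v powr (1 - \<alpha>))" .
    show "prob ?F \<le> \<theta>L / (z / 2) powr \<xi>"
      by (rule arm_tail_signed[OF \<sigma> istar_lt_K _ n]) (use z2 in simp)
  qed
  also have "\<dots> \<le> (\<theta>L * 2 powr \<xi> + 2 * (real K + 1) * (2 * \<kappa>) powr (\<alpha> - 1)) / z powr (\<alpha> - 1)"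
  proof -
    have "\<theta>L / (z / 2) powr \<xi> = \<theta>L * 2 powr \<xi> / z powr \<xi>"
      by (simp add: powr_divide)
    also have "\<dots> \<le> \<theta>L * 2 powr \<xi> / z powr (\<alpha> - 1)"
      using z2 \<theta>L_gt_1 \<alpha>_upper \<eta>_ge_half \<xi>_gt_1
      by (intro divide_left_mono powr_mono) (auto simp: algebra_simps intro: order.trans[of _ "\<xi> * (1 - \<eta>)"])
    finally have tail_F: "\<theta>L / (z / 2) powr \<xi> \<le> \<theta>L * 2 powr \<xi> / z powr (\<alpha> - 1)" .
    have "real v powr (1 - \<alpha>) \<le> (z / (2 * \<kappa>)) powr (1 - \<alpha>)"
      using v z2 \<alpha>_gt_2 tail_scale_pos by (intro powr_mono2') auto
    also have "\<dots> = (2 * \<kappa>) powr (\<alpha> - 1) / z powr (\<alpha> - 1)"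
      using powr_minus_divide[of "z / (2 * \<kappa>)" "\<alpha> - 1"] by (simp add: powr_divide)
    finally have "(2 + 2 * real K) * real v powr (1 - \<alpha>) \<le> (2 + 2 * real K) * ((2 * \<kappa>) powr (\<alpha> - 1) / z powr (\<alpha> - 1))"
      by (intro mult_left_mono) auto
    with tail_F show ?thesis
      by (simp add: add_divide_distrib algebra_simps)
  qed
  finally show ?thesis .
qed

lemma prob_dev_avg_tail:
  assumes "\<sigma> \<in> {- 1, 1}" and "n \<ge> 1" and "1 \<le> z"
  shows "prob {w \<in> space M. real n powr \<eta>' * z \<le> \<sigma> * dev_avg n w} \<le> \<theta>' / z powr (\<alpha> - 1)"
proof -
  have "prob {w \<in> space M. real n powr \<eta>' * z \<le> \<sigma> * dev_avg n w}
      \<le> (z0 powr (\<alpha> - 1) + (\<theta>L * 2 powr \<xi> + 2 * (real K + 1) * (2 * \<kappa>) powr (\<alpha> - 1)))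
        / z powr (\<alpha> - 1)"
    using prob_dev_avg_tail_large[OF assms(1,2)] assms(3) \<alpha>_gt_2 \<theta>L_gt_1
    by (intro prob_le_powr_from_large) (auto simp: tail_start_def)
  then show ?thesis
    by (simp add: ucb_tail_const_def add.assoc)
qed

lemma abs_dev_avg_le:
  assumes adm: "admissible n w" and n: "n \<ge> 1"
  shows "\<bar>dev_avg n w\<bar> \<le> (\<Lambda> + 2 * (Rc + Rx)) * real n"
proof -
  have w: "w \<in> space M"
    using adm by (simp add: admissible_def)
  have "subopt_pulls n w \<le> (\<Sum>i<K. real (T i n w))"
    by (intro sum_mono2) auto
  also have "\<dots> = real n"
    using sum_Tarm[OF w, of n] by (simp flip: of_nat_sum)
  finally have "\<Lambda> * subopt_pulls n w \<le> \<Lambda> * real n"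
    using pull_cost_pos by (intro mult_left_mono) auto
  moreover have "\<bar>dev istar n w\<bar> \<le> real n * (2 * (Rc + Rx))"
  proof -
    have "\<bar>rho istar n w - mu istar\<bar> \<le> 2 * (Rc + Rx)"
      using abs_rho_arm_le[OF adm istar_lt_K n order.refl] abs_mu_arm_le[OF istar_lt_K]
      by (simp add: abs_le_iff)
    moreover have "dev istar n w = real n * (rho istar n w - mu istar)"
      by (simp add: right_diff_distrib)
    ultimately show ?thesis
      by (simp add: abs_mult mult_left_mono)
  qed
  ultimately show ?thesis
    using dev_avg_decomposition[OF adm n] by (simp add: abs_le_iff algebra_simps)
qed

lemma integral_abs_dev_avg_le:
  assumes n: "n \<ge> 1"
  shows "(\<integral>w. \<bar>dev_avg n w\<bar> \<partial>M) \<le> real n powr \<eta>' * (1 + 4 * \<theta>' / (1 - 2 powr (2 - \<alpha>)))"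
proof -
  have "(\<integral>w. \<bar>dev_avg n w\<bar> \<partial>M) \<le> real n powr \<eta>' * (1 + 2 * (2 * \<theta>') / (1 - 2 powr (1 - (\<alpha> - 1))))"
  proof (rule integral_abs_le_of_tail)
    show "dev_avg n \<in> borel_measurable M"
      by measurable
    show "AE w in M. \<bar>dev_avg n w\<bar> \<le> (\<Lambda> + 2 * (Rc + Rx)) * real n"
      using AE_admissible[of n] by eventually_elim (rule abs_dev_avg_le[OF _ n])
    show "0 < real n powr \<eta>'" "1 < \<alpha> - 1"
      using n \<alpha>_gt_2 by auto
    fix z :: real
    assume z: "1 \<le> z"
    have "prob {w \<in> space M. real n powr \<eta>' * z \<le> \<bar>dev_avg n w\<bar>}
        \<le> prob {w \<in> space M. real n powr \<eta>' * z \<le> 1 * dev_avg n w}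
          + prob {w \<in> space M. real n powr \<eta>' * z \<le> - 1 * dev_avg n w}"
      using prob_abs_ge_le[of "dev_avg n"] by simp
    also have "\<dots> \<le> \<theta>' / z powr (\<alpha> - 1) + \<theta>' / z powr (\<alpha> - 1)"
      using prob_dev_avg_tail[of 1 n z] prob_dev_avg_tail[of "- 1" n z] n z by (intro add_mono) auto
    finally show "prob {w \<in> space M. real n powr \<eta>' * z \<le> \<bar>dev_avg n w\<bar>} \<le> 2 * \<theta>' / z powr (\<alpha> - 1)"
      by simp
  qed
  then show ?thesis
    by simp
qed

lemma bias_le:
  assumes n: "n \<ge> 1"
  shows "\<bar>mu istar - (\<integral>w. rho_bar K \<beta> \<gamma> S c x nx a n w \<partial>M)\<bar>
    \<le> (1 + 4 * \<theta>' / (1 - 2 powr (2 - \<alpha>))) * real n powr (\<eta>' - 1)"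
proof -
  have np: "real n > 0"
    using n by simp
  have int: "integrable M (dev_avg n)"
    using AE_admissible[of n] abs_dev_avg_le[OF _ n]
    by (intro integrable_const_bound[where B = "(\<Lambda> + 2 * (Rc + Rx)) * real n"]) (auto elim: AE_mp)
  have "(\<integral>w. rho_bar K \<beta> \<gamma> S c x nx a n w \<partial>M) = (\<integral>w. dev_avg n w / real n + mu istar \<partial>M)"
    using np by (intro Bochner_Integration.integral_cong) (simp_all add: field_simps)
  also have "\<dots> = (\<integral>w. dev_avg n w \<partial>M) / real n + mu istar"
    using int by (simp add: prob_space)
  finally have "\<bar>mu istar - (\<integral>w. rho_bar K \<beta> \<gamma> S c x nx a n w \<partial>M)\<bar> = \<bar>\<integral>w. dev_avg n w \<partial>M\<bar> / real n"
    by (simp add: abs_divide)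
  also have "\<dots> \<le> (\<integral>w. \<bar>dev_avg n w\<bar> \<partial>M) / real n"
    using np by (intro divide_right_mono integral_abs_bound) auto
  also have "\<dots> \<le> real n powr \<eta>' * (1 + 4 * \<theta>' / (1 - 2 powr (2 - \<alpha>))) / real n"
    using np integral_abs_dev_avg_le[OF n] by (intro divide_right_mono) auto
  also have "\<dots> = (1 + 4 * \<theta>' / (1 - 2 powr (2 - \<alpha>))) * real n powr (\<eta>' - 1)"
    using np by (simp add: powr_diff)
  finally show ?thesis .
qed

lemma expectation_rho_bar_tendsto:
  "(\<lambda>n. \<integral>w. rho_bar K \<beta> \<gamma> S c x nx a n w \<partial>M) \<longlonglongrightarrow> mu istar"
proof (rule LIM_zero_cancel, rule Lim_null_comparison)
  let ?C = "1 + 4 * \<theta>' / (1 - 2 powr (2 - \<alpha>))"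
  show "\<forall>\<^sub>F n in sequentially. norm ((\<integral>w. rho_bar K \<beta> \<gamma> S c x nx a n w \<partial>M) - mu istar)
      \<le> ?C * real n powr (\<eta>' - 1)"
    using eventually_ge_at_top[of 1] by eventually_elim (use bias_le in \<open>auto simp: abs_minus_commute\<close>)
  have "(\<lambda>n. real n powr (\<eta>' - 1)) \<longlonglongrightarrow> 0"
    using \<eta>'_lt_1 by (intro tendsto_neg_powr filterlim_real_sequentially) auto
  then show "(\<lambda>n. ?C * real n powr (\<eta>' - 1)) \<longlonglongrightarrow> 0"
    by (rule tendsto_mult_right_zero)
qed

lemma dev_avg_upper_tail:
  assumes "n \<ge> 1" and "1 \<le> z"
  shows "prob {w \<in> space M. dev_avg n w \<ge> real n powr \<eta>' * z} \<le> \<theta>' / z powr (\<alpha> - 1)"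
  using prob_dev_avg_tail[of 1, OF _ assms] by simp

lemma dev_avg_lower_tail:
  assumes "n \<ge> 1" and "1 \<le> z"
  shows "prob {w \<in> space M. dev_avg n w \<le> - (real n powr \<eta>' * z)} \<le> \<theta>' / z powr (\<alpha> - 1)"
proof -
  have "{w \<in> space M. dev_avg n w \<le> - (real n powr \<eta>' * z)}
      = {w \<in> space M. real n powr \<eta>' * z \<le> - 1 * dev_avg n w}"
    by auto
  then show ?thesis
    using prob_dev_avg_tail[of "- 1", OF _ assms] by simp
qed

end

theorem theorem4:
  fixes \<beta> R \<xi> \<eta> \<alpha> \<theta>L \<Delta>min :: real and K :: nat
  assumes "\<beta> > 0" and "\<xi> > 1" and "1/2 \<le> \<eta>" and "\<eta> < 1" and "\<alpha> > 2"
    and "\<xi> * \<eta> * (1 - \<eta>) \<le> \<alpha>" and "\<alpha> < \<xi> * (1 - \<eta>)"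
    and "\<theta>L > 1" and "K \<ge> 2"
  shows "\<exists>C \<theta>'. \<theta>' > 1 \<and>
    (\<forall>(M :: 'w measure) S Rc Rx \<gamma> \<theta> c P x mu_s nx a istar.
       Rc + Rx = R \<longrightarrow> \<theta> > 1 \<longrightarrow>
       nd_bandit M K S Rc Rx \<beta> \<gamma> \<theta> \<xi> \<eta> c P x mu_s nx \<longrightarrow>
       (\<forall>i<K. \<forall>z::real. \<forall>n::nat. z \<ge> 1 \<longrightarrow> n \<ge> 1 \<longrightarrow>
          measure M {w \<in> space M. real n * rho_arm \<beta> \<gamma> S c x nx i n w
                          - real n * mu_arm \<beta> \<gamma> c P mu_s i \<ge> real n powr \<eta> * z} \<le> \<theta>L / z powr \<xi> \<and>
          measure M {w \<in> space M. real n * rho_arm \<beta> \<gamma> S c x nx i n w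
                          - real n * mu_arm \<beta> \<gamma> c P mu_s i \<le> - (real n powr \<eta> * z)} \<le> \<theta>L / z powr \<xi>) \<longrightarrow>
       istar < K \<longrightarrow>
       (\<forall>i<K. i \<noteq> istar \<longrightarrow> mu_arm \<beta> \<gamma> c P mu_s istar < mu_arm \<beta> \<gamma> c P mu_s i) \<longrightarrow>
       \<Delta>min = Min ((\<lambda>i. mu_arm \<beta> \<gamma> c P mu_s i - mu_arm \<beta> \<gamma> c P mu_s istar) ` ({..<K} - {istar})) \<longrightarrow>
       ucb_policy M K \<beta> \<gamma> S c x nx \<theta>L \<xi> \<alpha> \<eta> a \<longrightarrow>
       (let \<mu>star = mu_arm \<beta> \<gamma> c P mu_s istar;
            \<rho>bar = rho_bar K \<beta> \<gamma> S c x nx a;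
            \<eta>' = \<alpha> / (\<xi> * (1 - \<eta>));
            \<xi>' = \<alpha> - 1
        in (\<forall>n::nat. n \<ge> 1 \<longrightarrow>
              \<bar>\<mu>star - integral\<^sup>L M (\<rho>bar n)\<bar> \<le> C * exp (2 * \<beta> * R) * real n powr (\<eta>' - 1)) \<and>
           ((\<lambda>n. integral\<^sup>L M (\<rho>bar n)) \<longlonglongrightarrow> \<mu>star) \<and>
           (\<forall>z::real. \<forall>n::nat. z \<ge> 1 \<longrightarrow> n \<ge> 1 \<longrightarrow>
              measure M {w \<in> space M. real n * \<rho>bar n w - real n * \<mu>star \<ge> real n powr \<eta>' * z}
                \<le> \<theta>' / z powr \<xi>' \<and>
              measure M {w \<in> space M. real n * \<rho>bar n w - real n * \<mu>star \<le> - (real n powr \<eta>' * z)}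
                \<le> \<theta>' / z powr \<xi>')))"
proof -
  define \<theta>' where "\<theta>' = ucb_tail_const \<beta> R K \<theta>L \<xi> \<eta> \<alpha> \<Delta>min"
  define C where "C = 1 + 4 * \<theta>' / (1 - 2 powr (2 - \<alpha>))"
  have \<theta>': "\<theta>' > 1"
    unfolding \<theta>'_def using assms by (intro ucb_tail_const_gt_1) auto
  have "(2::real) powr (2 - \<alpha>) < 2 powr 0"
    using assms by (intro powr_less_mono) auto
  then have C: "0 \<le> C"
    using \<theta>' by (simp add: C_def)
  show ?thesis
    apply (rule exI[of _ C], rule exI[of _ \<theta>'], intro conjI \<theta>' allI impI)
    subgoal premises prems for M S Rc Rx \<gamma> \<theta> c P x mu_s nx a istar
    proof -
      interpret ucb_run M K S Rc Rx \<beta> \<gamma> c P x mu_s nx \<xi> \<eta> \<alpha> \<theta>L \<Delta>min a istar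
      proof (intro ucb_run.intro bounded_nd_bandit.intro bounded_nd_bandit_axioms.intro ucb_run_axioms.intro)
        show "prob_space M"
          using prems(3) by (simp add: nd_bandit_def)
      qed (use prems assms in \<open>simp_all add: nd_bandit_def\<close>)
      have "\<bar>mu istar - (\<integral>w. rho_bar K \<beta> \<gamma> S c x nx a n w \<partial>M)\<bar>
          \<le> C * exp (2 * \<beta> * R) * real n powr (\<eta>' - 1)" if "n \<ge> 1" for n
      proof -
        have "1 \<le> exp (2 * \<beta> * R)"
          using R_nonneg prems(1) assms(1) by simp
        then have "C * real n powr (\<eta>' - 1) \<le> C * exp (2 * \<beta> * R) * real n powr (\<eta>' - 1)"
          using C by (simp add: mult_le_cancel_left1 mult_right_mono)
        then show ?thesis
          using bias_le[OF that] prems(1) by (simp add: C_def \<theta>'_def)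
      qed
      then show ?thesis
        using expectation_rho_bar_tendsto dev_avg_upper_tail dev_avg_lower_tail prems(1)
        by (simp add: Let_def \<theta>'_def)
    qed
    done
qed

end
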